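(* Let $\lambda>0$. Then $\lim_{c_0\to\infty}M_2(\lambda,c_0)=\sqrt{2}$.
   Context: For $A\in\mathbb{R}^{3\times3}$ let $\lambda_1(A),\lambda_2(A),\lambda_3(A)$ be its singular values, $P(A)=\sum_{1\le i<j\le3}\lambda_i(A)\lambda_j(A)-\lambda\sum_i\lambda_i(A)$, $N(A)=\operatorname{tr}\operatorname{cof}A-\lambda\operatorname{tr}A$ (cof the cofactor matrix), and $G(A)=P(A)-N(A)$. $|\cdot|$ is the Frobenius norm and $\mathbf{1}$ the identity. For $c_0>0$, $M_2(\lambda,c_0)=\sup\{|G(A)|/|A-\lambda\mathbf{1}|^2:\ |A-\lambda\mathbf{1}|\ge c_0\}$. *)

theory Defs
  imports "HOL-Analysis.Analysis"
begin

type_synonym mat3 = "real^3^3"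

definition diag3 :: "real^3 \<Rightarrow> mat3" where
  "diag3 l = (\<chi> i j. if i = j then l $ i else 0)"

text \<open>The multiset of singular values is uniquely determined, so symmetric
  functions of them are well defined.\<close>
definition svals :: "mat3 \<Rightarrow> real^3" where
  "svals A = (SOME l. (\<forall>i. l $ i \<ge> 0) \<and>
      (\<exists>U V. orthogonal_matrix U \<and> orthogonal_matrix V \<and> A = U ** diag3 l ** V))"

text \<open>Cofactor matrix: entry (i,j) is det of A with row i replaced by e_j,
  i.e. (-1)^(i+j) times the (i,j) minor.\<close>
definition cof :: "mat3 \<Rightarrow> mat3" where
  "cof A = (\<chi> i j. det (\<chi> k l. if k = i then (if l = j then 1 else 0) else A $ k $ l))"

definition Pfun :: "real \<Rightarrow> mat3 \<Rightarrow> real" where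
  "Pfun lam A = (\<Sum>i\<in>UNIV. \<Sum>j\<in>UNIV. if i < j then svals A $ i * svals A $ j else 0)
                 - lam * (\<Sum>i\<in>UNIV. svals A $ i)"

definition Nfun :: "real \<Rightarrow> mat3 \<Rightarrow> real" where
  "Nfun lam A = trace (cof A) - lam * trace A"

definition Gfun :: "real \<Rightarrow> mat3 \<Rightarrow> real" where
  "Gfun lam A = Pfun lam A - Nfun lam A"

text \<open>norm on real^3^3 is the Frobenius norm.\<close>
definition M2 :: "real \<Rightarrow> real \<Rightarrow> real" where
  "M2 lam c0 = (SUP A \<in> {A :: mat3. norm (A - lam *\<^sub>R mat 1) \<ge> c0}.
                  \<bar>Gfun lam A\<bar> / (norm (A - lam *\<^sub>R mat 1))\<^sup>2)"

end

theory Submission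
  imports Defs "HOL-Real_Asymp.Real_Asymp"
begin

(* Write A = U diag(l) V with U, V orthogonal and put W = V U, d = det W. Then
   tr A = \<Sum> l_i W_ii and tr cof A = d \<Sum> l_j l_k W_ii ({i,j,k} = {1,2,3}), so

     G(A) = \<Sum> l_j l_k (1 - x_i) - \<lambda> \<Sum> l_i (1 - W_ii),   x_i = d W_ii.

   The x_i form the diagonal of the rotation d W, and diagonals of rotations of R^3
   lie in the tetrahedron with vertices (1,1,1), (1,-1,-1), (-1,1,-1), (-1,-1,1).
   The quadratic part is affine in x, and at the vertices it equals 0 or
   2 l_i (l_j + l_k) \<le> \<surd>2 |l|^2 = \<surd>2 |A|^2, while the linear part is O(\<lambda> |A|);
   hence M_2(\<lambda>, c_0) \<le> \<surd>2 + O(1/c_0).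
   Conversely A = diag(t, t, -\<surd>2 t) attains equality in the quadratic estimate,
   and its ratio tends to \<surd>2 as t \<rightarrow> \<infinity>. *)

(* In the numeral type 3 the numeral 3 is 0, the least element. *)
lemma less_num3_simps:
  "(3::3) < 1" "(3::3) < 2" "(1::3) < 2" "\<not> (2::3) < 1" "\<not> (1::3) < 3" "\<not> (2::3) < 3"
  by (simp_all add: less_bit1_def bit1.Rep_numeral bit1.Rep_1)

lemma Pfun_eq:
  "Pfun lam A = svals A$1 * svals A$2 + svals A$1 * svals A$3 + svals A$2 * svals A$3
     - lam * (svals A$1 + svals A$2 + svals A$3)"
  by (simp add: Pfun_def sum_3 less_num3_simps algebra_simps)

lemma trace_cof:
  "trace (cof A) = A$2$2*A$3$3 - A$2$3*A$3$2 + A$1$1*A$3$3 - A$1$3*A$3$1 + A$1$1*A$2$2 - A$1$2*A$2$1"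
  by (simp add: cof_def trace_def sum_3 det_3)

lemma trace_cof_eq_trace_square: "trace (cof A) = ((trace A)\<^sup>2 - trace (A ** A)) / 2"
  unfolding trace_cof
  by (simp add: trace_def sum_3 matrix_matrix_mult_def power2_eq_square algebra_simps)

lemma transpose_cof_mult: "transpose (cof A) ** A = det A *\<^sub>R mat 1"
  by (simp add: vec_eq_iff forall_3 matrix_matrix_mult_def sum_3 cof_def det_3 mat_def
      transpose_def algebra_simps)

lemma cof_orthogonal_matrix:
  assumes "orthogonal_matrix W"
  shows "cof W = det W *\<^sub>R W"
proof -
  have "transpose (cof W) = transpose (cof W) ** (W ** transpose W)"
    using assms by (simp add: orthogonal_matrix_def)
  also have "\<dots> = det W *\<^sub>R transpose W"
    by (simp add: matrix_mul_assoc transpose_cof_mult flip: scalar_matrix_assoc)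
  finally show ?thesis
    by (metis transpose_scalar transpose_transpose)
qed

lemma orthogonal_matrix_cof_diag:
  fixes W :: mat3
  assumes "orthogonal_matrix W"
  shows "W$2$2*W$3$3 - W$2$3*W$3$2 = det W * W$1$1"
    and "W$1$1*W$3$3 - W$1$3*W$3$1 = det W * W$2$2"
    and "W$1$1*W$2$2 - W$1$2*W$2$1 = det W * W$3$3"
proof -
  have "cof W $ i $ i = det W * W$i$i" for i
    using cof_orthogonal_matrix[OF assms] by simp
  from this[of 1] this[of 2] this[of 3] show
    "W$2$2*W$3$3 - W$2$3*W$3$2 = det W * W$1$1"
    "W$1$1*W$3$3 - W$1$3*W$3$1 = det W * W$2$2"
    "W$1$1*W$2$2 - W$1$2*W$2$1 = det W * W$3$3"
    by (simp_all add: cof_def det_3)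
qed

lemma orthogonal_matrix_row_norm:
  assumes "orthogonal_matrix (W::mat3)"
  shows "(W$i$1)\<^sup>2 + (W$i$2)\<^sup>2 + (W$i$3)\<^sup>2 = 1"
  using arg_cong[OF conjunct2[OF assms[unfolded orthogonal_matrix_def]], of "\<lambda>M. M$i$i"]
  by (simp add: matrix_matrix_mult_def sum_3 transpose_def mat_def power2_eq_square)

lemma orthogonal_matrix_entry_abs_le:
  fixes W :: "real^'n^'n"
  assumes "orthogonal_matrix W"
  shows "\<bar>W$i$j\<bar> \<le> 1"
proof -
  have "norm (W$i) = 1"
    using assms by (simp add: orthogonal_matrix_orthonormal_rows row_def)
  then show ?thesis
    using component_le_norm_cart[of "W$i" j] by simp
qed

lemma orthogonal_matrix_iff_rows:
  "orthogonal_matrix (M::real^'n^'n) \<longleftrightarrow> (\<forall>i j. M$i \<bullet> M$j = (if i = j then 1 else 0))"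
proof -
  have "orthogonal_matrix M \<longleftrightarrow> M ** transpose M = mat 1"
    by (metis matrix_left_right_inverse orthogonal_matrix_def)
  then show ?thesis
    by (simp add: vec_eq_iff matrix_matrix_mult_def transpose_def mat_def inner_vec_def)
qed

lemma orthogonal_matrix_mult_cancel:
  fixes U :: "real^'n^'n"
  assumes "orthogonal_matrix U"
  shows "X ** transpose U ** U = X" "X ** U ** transpose U = X"
  using assms by (simp_all add: orthogonal_matrix_def flip: matrix_mul_assoc)

lemma diag3_mult: "diag3 l ** W = (\<chi> i j. l$i * W$i$j)"
  by (simp add: vec_eq_iff forall_3 diag3_def matrix_matrix_mult_def sum_3)

lemma mult_diag3: "W ** diag3 l = (\<chi> i j. W$i$j * l$j)"
  by (simp add: vec_eq_iff forall_3 diag3_def matrix_matrix_mult_def sum_3)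

lemma transpose_diag3: "transpose (diag3 l) = diag3 l"
  by (simp add: vec_eq_iff forall_3 diag3_def transpose_def)

lemma norm_sq_eq_trace: "(norm (A::mat3))\<^sup>2 = trace (transpose A ** A)"
  unfolding power2_norm_eq_inner
  by (simp add: inner_vec_def trace_def sum_3 matrix_matrix_mult_def transpose_def)

lemma norm_sq_eq_entries: "(norm (A::mat3))\<^sup>2 = (\<Sum>i\<in>UNIV. \<Sum>j\<in>UNIV. (A$i$j)\<^sup>2)"
  unfolding power2_norm_eq_inner by (simp add: inner_vec_def power2_eq_square)

lemma entry_abs_le_norm: "\<bar>(A::real^'n^'m)$i$j\<bar> \<le> norm A"
proof -
  have "\<bar>A$i$j\<bar> \<le> norm (A$i)"
    by (rule component_le_norm_cart)
  also have "\<dots> \<le> norm A"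
    by (rule Finite_Cartesian_Product.norm_nth_le)
  finally show ?thesis .
qed

lemma norm_mat1: "norm (mat 1 :: mat3) = sqrt 3"
proof -
  have "(norm (mat 1 :: mat3))\<^sup>2 = 3"
    unfolding norm_sq_eq_entries by (simp add: mat_def sum_3)
  then show ?thesis
    by (metis norm_ge_zero real_sqrt_unique)
qed

section \<open>Diagonals of rotations\<close>

lemma rotation_matrix_trace_ge:
  fixes R :: mat3
  assumes "rotation_matrix R"
  shows "trace R \<ge> -1"
proof -
  let ?t = "R$1$1 + R$2$2 + R$3$3"
  have oR: "orthogonal_matrix R" and dR: "det R = 1"
    using assms by (auto simp: rotation_matrix_def)
  note rows = orthogonal_matrix_row_norm[OF oR, of 1] orthogonal_matrix_row_norm[OF oR, of 2]
    orthogonal_matrix_row_norm[OF oR, of 3]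
  note cofs = orthogonal_matrix_cof_diag[OF oR, unfolded dR mult_1]
  have skew: "(R$1$2 - R$2$1)\<^sup>2 + (R$1$3 - R$3$1)\<^sup>2 + (R$2$3 - R$3$2)\<^sup>2 = (3 - ?t) * (1 + ?t)"
    using rows cofs by algebra
  have diag: "R$i$i \<le> 1" for i
    using orthogonal_matrix_entry_abs_le[OF oR, of i i] by simp
  have "?t \<le> 3"
    using diag[of 1] diag[of 2] diag[of 3] by linarith
  moreover have "(3 - ?t) * (1 + ?t) \<ge> 0"
    unfolding skew[symmetric] by simp
  ultimately have "1 + ?t \<ge> 0"
    by (smt (verit) mult_pos_neg)
  then show ?thesis
    by (simp add: trace_def sum_3)
qed

lemma rotation_matrix_trace_le_diag:
  fixes R :: mat3
  assumes "rotation_matrix R"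
  shows "trace R \<le> 1 + 2 * R$j$j"
proof -
  define F where "F = diag3 (\<chi> i. if i = j then 1 else -1)"
  have "orthogonal_matrix F"
    unfolding orthogonal_matrix_iff_rows
    by (simp add: F_def diag3_def inner_vec_def sum_3 forall_3)
  moreover have "det F = 1"
    using exhaust_3[of j] by (auto simp: F_def diag3_def det_3)
  ultimately have "rotation_matrix (R ** F)"
    using assms by (simp add: rotation_matrix_def orthogonal_matrix_mul det_mul)
  then have "trace (R ** F) \<ge> -1"
    by (rule rotation_matrix_trace_ge)
  moreover have "trace (R ** F) = 2 * R$j$j - trace R"
    using exhaust_3[of j] by (auto simp: F_def mult_diag3 trace_def sum_3)
  ultimately show ?thesis
    by simp
qed

lemma sqrt2_weighted_product_le: "2 * a * (b + c) \<le> sqrt 2 * (a\<^sup>2 + b\<^sup>2 + c\<^sup>2)"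
proof -
  have s2: "sqrt 2 * sqrt 2 = 2"
    by simp
  have "0 \<le> (sqrt 2 / 2) * (sqrt 2 * a - (b + c))\<^sup>2 + (sqrt 2 / 2) * (b - c)\<^sup>2"
    by simp
  also have "\<dots> = sqrt 2 * (a\<^sup>2 + b\<^sup>2 + c\<^sup>2) - 2 * a * (b + c)"
    by (simp add: power2_eq_square algebra_simps s2) (simp add: field_simps)
  finally show ?thesis
    by simp
qed

lemma tetrahedron_weighted_sum_le:
  fixes l1 l2 l3 x1 x2 x3 :: real
  assumes "l1 \<ge> 0" "l2 \<ge> 0" "l3 \<ge> 0"
    and "x1 + x2 + x3 \<ge> -1"
    and "x1 + x2 + x3 \<le> 1 + 2 * x1" "x1 + x2 + x3 \<le> 1 + 2 * x2" "x1 + x2 + x3 \<le> 1 + 2 * x3"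
  shows "l2 * l3 * (1 - x1) + l1 * l3 * (1 - x2) + l1 * l2 * (1 - x3)
           \<le> sqrt 2 * (l1\<^sup>2 + l2\<^sup>2 + l3\<^sup>2)"
proof -
  let ?S = "sqrt 2 * (l1\<^sup>2 + l2\<^sup>2 + l3\<^sup>2)"
  (* barycentric weights of x for the vertices (1,-1,-1), (-1,1,-1), (-1,-1,1);
     the remaining weight sits on (1,1,1), where the left-hand side vanishes *)
  define c1 where "c1 = (1 + 2 * x1 - (x1 + x2 + x3)) / 4"
  define c2 where "c2 = (1 + 2 * x2 - (x1 + x2 + x3)) / 4"
  define c3 where "c3 = (1 + 2 * x3 - (x1 + x2 + x3)) / 4"
  have c: "c1 \<ge> 0" "c2 \<ge> 0" "c3 \<ge> 0" "c1 + c2 + c3 \<le> 1"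
    using assms by (simp_all add: c1_def c2_def c3_def field_simps)
  have "l2 * l3 * (1 - x1) + l1 * l3 * (1 - x2) + l1 * l2 * (1 - x3)
      = c1 * (2 * l1 * (l2 + l3)) + c2 * (2 * l2 * (l1 + l3)) + c3 * (2 * l3 * (l1 + l2))"
    by (simp add: c1_def c2_def c3_def field_simps)
  also have "\<dots> \<le> c1 * ?S + c2 * ?S + c3 * ?S"
    using sqrt2_weighted_product_le[of l1 l2 l3] sqrt2_weighted_product_le[of l2 l1 l3]
      sqrt2_weighted_product_le[of l3 l1 l2] c(1-3)
    by (intro add_mono mult_left_mono) (simp_all add: ac_simps)
  also have "\<dots> = (c1 + c2 + c3) * ?S"
    by (simp add: algebra_simps)
  also have "\<dots> \<le> ?S"
    by (rule mult_left_le_one_le) (use c in auto)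
  finally show ?thesis .
qed

lemma det_scaleR_mat3: "det (c *\<^sub>R (W::mat3)) = c ^ 3 * det W"
  by (simp add: det_3 algebra_simps power3_eq_cube)

lemma orthogonal_matrix_quadratic_bounds:
  fixes W :: mat3 and l :: "real^3"
  assumes "orthogonal_matrix W" "\<And>i. l$i \<ge> 0"
  shows "0 \<le> l$2 * l$3 * (1 - det W * W$1$1) + l$1 * l$3 * (1 - det W * W$2$2)
           + l$1 * l$2 * (1 - det W * W$3$3)"
    and "l$2 * l$3 * (1 - det W * W$1$1) + l$1 * l$3 * (1 - det W * W$2$2)
           + l$1 * l$2 * (1 - det W * W$3$3) \<le> sqrt 2 * ((l$1)\<^sup>2 + (l$2)\<^sup>2 + (l$3)\<^sup>2)"
proof -
  define R where "R = det W *\<^sub>R W"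
  have d: "det W = 1 \<or> det W = -1"
    by (rule det_orthogonal_matrix[OF assms(1)])
  have "orthogonal_matrix R"
    using assms(1) d by (auto simp: R_def orthogonal_matrix_def transpose_scalar
        matrix_scalar_ac simp flip: scalar_matrix_assoc)
  moreover have "det R = 1"
    using d by (auto simp: R_def det_scaleR_mat3)
  ultimately have rot: "rotation_matrix R"
    by (simp add: rotation_matrix_def)
  have "R$i$i \<le> 1" for i
    using orthogonal_matrix_entry_abs_le[OF \<open>orthogonal_matrix R\<close>, of i i] by simp
  then show "0 \<le> l$2 * l$3 * (1 - det W * W$1$1) + l$1 * l$3 * (1 - det W * W$2$2)
           + l$1 * l$2 * (1 - det W * W$3$3)"
    using assms(2) by (simp add: R_def add_nonneg_nonneg)
  have trR: "trace R = R$1$1 + R$2$2 + R$3$3"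
    by (simp add: trace_def sum_3)
  show "l$2 * l$3 * (1 - det W * W$1$1) + l$1 * l$3 * (1 - det W * W$2$2)
           + l$1 * l$2 * (1 - det W * W$3$3) \<le> sqrt 2 * ((l$1)\<^sup>2 + (l$2)\<^sup>2 + (l$3)\<^sup>2)"
    using tetrahedron_weighted_sum_le[OF assms(2)[of 1] assms(2)[of 2] assms(2)[of 3]
        rotation_matrix_trace_ge[OF rot, unfolded trR]
        rotation_matrix_trace_le_diag[OF rot, of 1, unfolded trR]
        rotation_matrix_trace_le_diag[OF rot, of 2, unfolded trR]
        rotation_matrix_trace_le_diag[OF rot, of 3, unfolded trR]]
    by (simp add: R_def)
qed

section \<open>Singular value decomposition\<close>

lemma quadratic_nonpos_imp_zero:
  fixes a b :: real
  assumes h: "\<And>t. 2 * t * a + t\<^sup>2 * b \<le> 0" and "a \<ge> 0"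
  shows "a = 0"
proof (rule ccontr)
  assume "a \<noteq> 0"
  with \<open>a \<ge> 0\<close> have a: "a > 0"
    by simp
  define t where "t = a / (\<bar>b\<bar> + 1)"
  have t: "t > 0"
    using a by (simp add: t_def add_pos_nonneg)
  have "t * \<bar>b\<bar> < a"
  proof -
    have "t * \<bar>b\<bar> = a * (\<bar>b\<bar> / (\<bar>b\<bar> + 1))"
      by (simp add: t_def)
    also have "\<dots> < a * 1"
      using a by (intro mult_strict_left_mono) auto
    finally show ?thesis
      by simp
  qed
  moreover have "t * (2 * a + t * b) \<le> 0"
    using h[of t] by (simp add: power2_eq_square algebra_simps)
  then have "2 * a + t * b \<le> 0"
    using t by (simp add: mult_le_0_iff)
  moreover have "t * b \<ge> - (t * \<bar>b\<bar>)"
    using mult_left_mono[of "-\<bar>b\<bar>" b t] t by simp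
  ultimately show False
    using a by linarith
qed

(* Perturbing v in the direction w = S v - \<mu> v changes the quadratic form to first order
   by 2 t |w|^2, which maximality forbids unless w = 0. *)
lemma symmetric_matrix_eigenvector_if_max:
  fixes S :: "real^'n^'n"
  assumes sym: "\<And>x y. (S *v x) \<bullet> y = x \<bullet> (S *v y)"
    and L: "subspace L" "\<And>x. x \<in> L \<Longrightarrow> S *v x \<in> L"
    and v: "v \<in> L" "norm v = 1"
    and max: "\<And>x. x \<in> L \<Longrightarrow> x \<bullet> (S *v x) \<le> (v \<bullet> (S *v v)) * (norm x)\<^sup>2"
  shows "S *v v = (v \<bullet> (S *v v)) *\<^sub>R v"
proof -
  define f where "f x = x \<bullet> (S *v x)" for x
  define \<mu> where "\<mu> = f v"
  define w where "w = S *v v - \<mu> *\<^sub>R v"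
  have wL: "w \<in> L"
    unfolding w_def using v L by (intro subspace_diff subspace_scale) auto
  have "2 * t * (w \<bullet> w) + t\<^sup>2 * (f w - \<mu> * (norm w)\<^sup>2) \<le> 0" for t
  proof -
    have "v + t *\<^sub>R w \<in> L"
      using v wL L by (intro subspace_add subspace_scale) auto
    then have "f (v + t *\<^sub>R w) \<le> \<mu> * (norm (v + t *\<^sub>R w))\<^sup>2"
      unfolding f_def \<mu>_def by (rule max)
    moreover have "f (v + t *\<^sub>R w) = \<mu> + 2 * t * (w \<bullet> (S *v v)) + t\<^sup>2 * f w"
      using sym[of v w] by (simp add: f_def \<mu>_def matrix_vector_right_distrib
          matrix_vector_mult_scaleR inner_add_left inner_add_right power2_eq_square
          inner_commute algebra_simps)
    moreover have "(norm (v + t *\<^sub>R w))\<^sup>2 = 1 + 2 * t * (v \<bullet> w) + t\<^sup>2 * (norm w)\<^sup>2"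
      using v(2)[unfolded norm_eq_1] unfolding power2_norm_eq_inner
      by (simp add: inner_add_left inner_add_right inner_commute algebra_simps power2_eq_square)
    moreover have "w \<bullet> w = w \<bullet> (S *v v) - \<mu> * (v \<bullet> w)"
      by (simp add: w_def inner_diff_right inner_commute algebra_simps)
    ultimately show ?thesis
      by (simp only:) (simp add: algebra_simps)
  qed
  then have "w \<bullet> w = 0"
    by (rule quadratic_nonpos_imp_zero) simp
  then show ?thesis
    by (simp add: w_def \<mu>_def f_def)
qed

lemma symmetric_matrix_max_eigenvector:
  fixes S :: "real^'n^'n" and L :: "(real^'n) set"
  assumes sym: "\<And>x y. (S *v x) \<bullet> y = x \<bullet> (S *v y)"
    and L: "subspace L" "\<And>x. x \<in> L \<Longrightarrow> S *v x \<in> L"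
    and x0: "x0 \<in> L" "x0 \<noteq> 0"
  obtains v where "v \<in> L" "norm v = 1" "S *v v = (v \<bullet> (S *v v)) *\<^sub>R v"
    "\<And>x. x \<in> L \<Longrightarrow> norm x = 1 \<Longrightarrow> x \<bullet> (S *v x) \<le> v \<bullet> (S *v v)"
proof -
  define f where "f x = x \<bullet> (S *v x)" for x
  define K where "K = sphere 0 1 \<inter> L"
  have "compact K"
    unfolding K_def by (intro compact_Int_closed compact_sphere closed_subspace L)
  moreover have "sgn x0 \<in> K"
    using x0 L by (simp add: K_def sgn_div_norm subspace_scale norm_sgn)
  moreover have "continuous_on K f"
    unfolding f_def by (intro continuous_intros linear_continuous_on matrix_vector_mul_bounded_linear)
  ultimately obtain v where vK: "v \<in> K" and vmax: "\<And>y. y \<in> K \<Longrightarrow> f y \<le> f v"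
    using continuous_attains_sup[of K f] by blast
  have v: "v \<in> L" "norm v = 1"
    using vK by (auto simp: K_def)
  have bound: "x \<bullet> (S *v x) \<le> (v \<bullet> (S *v v)) * (norm x)\<^sup>2" if "x \<in> L" for x
  proof (cases "x = 0")
    case False
    then have "sgn x \<in> K"
      using that L by (simp add: K_def sgn_div_norm subspace_scale norm_sgn)
    then have "f (sgn x) \<le> f v"
      by (rule vmax)
    then show ?thesis
      using False by (simp add: f_def sgn_div_norm matrix_vector_mult_scaleR power2_eq_square
          divide_le_eq field_simps)
  qed simp
  have "S *v v = (v \<bullet> (S *v v)) *\<^sub>R v"
    by (rule symmetric_matrix_eigenvector_if_max[OF sym L v bound])
  moreover have "\<And>x. x \<in> L \<Longrightarrow> norm x = 1 \<Longrightarrow> f x \<le> f v"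
    using vmax by (auto simp: K_def)
  ultimately show ?thesis
    using that v unfolding f_def by blast
qed

lemma exists_unit_orthogonal:
  fixes v :: "real^3"
  obtains w where "norm w = 1" "w \<bullet> v = 0"
proof -
  obtain y where "y \<noteq> 0" "orthogonal v y"
    using orthogonal_to_vector_exists[of v] by auto
  then show ?thesis
    using that[of "sgn y"] by (simp add: norm_sgn sgn_div_norm orthogonal_def inner_commute)
qed

lemma norm_cross3_orthonormal:
  assumes "norm u1 = 1" "norm u2 = 1" "u1 \<bullet> u2 = 0"
  shows "norm (cross3 u1 u2) = 1"
proof -
  have "(norm (cross3 u1 u2))\<^sup>2 = 1"
    using norm_cross[of u1 u2] assms by simp
  then show ?thesis
    using norm_ge_zero[of "cross3 u1 u2"] by (auto simp: power2_eq_1_iff)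
qed

lemma orthogonal_orthonormal_pair_eq_cross3:
  assumes "norm u1 = 1" "norm u2 = 1" "u1 \<bullet> u2 = 0" "x \<bullet> u1 = 0" "x \<bullet> u2 = 0"
  shows "x = (x \<bullet> cross3 u1 u2) *\<^sub>R cross3 u1 u2"
proof -
  define u where "u = cross3 u1 u2"
  have "u \<bullet> u = 1"
    using norm_cross3_orthonormal[OF assms(1-3)] by (simp add: u_def dot_square_norm)
  moreover have "cross3 x u = 0"
    unfolding u_def Lagrange using assms(4,5) by simp
  moreover have "cross3 u (cross3 x u) = (u \<bullet> u) *\<^sub>R x - (u \<bullet> x) *\<^sub>R u"
    by (rule Lagrange)
  ultimately show ?thesis
    by (simp add: u_def inner_commute)
qed

lemma orthonormal_pair_completion:
  fixes u1 u2 x :: "real^3"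
  assumes "norm u1 = 1" "norm u2 = 1" "u1 \<bullet> u2 = 0" "x \<bullet> u1 = 0" "x \<bullet> u2 = 0"
  obtains u3 where "norm u3 = 1" "u3 \<bullet> u1 = 0" "u3 \<bullet> u2 = 0" "x \<bullet> u3 \<ge> 0"
    "x = (x \<bullet> u3) *\<^sub>R u3"
proof -
  define c where "c = cross3 u1 u2"
  have "norm c = 1" "c \<bullet> u1 = 0" "c \<bullet> u2 = 0"
    using norm_cross3_orthonormal[OF assms(1-3)] dot_cross_self[of u1 u2]
    by (simp_all add: c_def inner_commute)
  moreover have "x = (x \<bullet> c) *\<^sub>R c"
    unfolding c_def by (rule orthogonal_orthonormal_pair_eq_cross3[OF assms])
  ultimately show ?thesis
    using that[of c] that[of "- c"] by (cases "x \<bullet> c \<ge> 0") auto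
qed

lemma symmetric_matrix_eigenbasis:
  fixes S :: mat3
  assumes sym: "\<And>x y. (S *v x) \<bullet> y = x \<bullet> (S *v y)"
  obtains V \<mu> where "orthogonal_matrix V" "\<And>i. S *v V$i = \<mu>$i *\<^sub>R V$i"
    "\<mu>$3 \<le> \<mu>$2" "\<mu>$2 \<le> \<mu>$1"
proof -
  obtain v1 where nv1: "norm v1 = 1" and ev1: "S *v v1 = (v1 \<bullet> (S *v v1)) *\<^sub>R v1"
    and max1: "\<And>x. norm x = 1 \<Longrightarrow> x \<bullet> (S *v x) \<le> v1 \<bullet> (S *v v1)"
    using symmetric_matrix_max_eigenvector[OF sym subspace_UNIV, of "axis 1 1"] by auto
  have invariant: "(S *v x) \<bullet> v = 0" if "x \<bullet> v = 0" "S *v v = c *\<^sub>R v" for x v c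
    using sym[of x v] that by simp
  define L2 where "L2 = {x. x \<bullet> v1 = 0}"
  have L2: "subspace L2" "\<And>x. x \<in> L2 \<Longrightarrow> S *v x \<in> L2"
    using invariant[OF _ ev1] by (auto simp: L2_def subspace_def inner_add_left)
  obtain p where "norm p = 1" "p \<bullet> v1 = 0"
    using exists_unit_orthogonal by blast
  then have "p \<in> L2" "p \<noteq> 0"
    by (auto simp: L2_def)
  then obtain v2 where "v2 \<in> L2" and nv2: "norm v2 = 1"
    and ev2: "S *v v2 = (v2 \<bullet> (S *v v2)) *\<^sub>R v2"
    and max2: "\<And>x. x \<in> L2 \<Longrightarrow> norm x = 1
      \<Longrightarrow> x \<bullet> (S *v x) \<le> v2 \<bullet> (S *v v2)"
    using symmetric_matrix_max_eigenvector[OF sym L2] by blast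
  then have v12: "v2 \<bullet> v1 = 0"
    by (simp add: L2_def)
  (* the orthogonal complement of two eigenvectors is an invariant line *)
  define v3 where "v3 = cross3 v1 v2"
  have v123: "v3 \<bullet> v1 = 0" "v3 \<bullet> v2 = 0"
    unfolding v3_def using dot_cross_self[of v1 v2] by (simp_all add: inner_commute)
  have nv3: "norm v3 = 1"
    unfolding v3_def using nv1 nv2 v12 by (simp add: norm_cross3_orthonormal inner_commute)
  have ev3: "S *v v3 = (v3 \<bullet> (S *v v3)) *\<^sub>R v3"
    using orthogonal_orthonormal_pair_eq_cross3[OF nv1 nv2, of "S *v v3"]
      invariant[OF v123(1) ev1] invariant[OF v123(2) ev2] v12
    by (simp add: v3_def inner_commute)
  define V where "V = (\<chi> i::3. if i = 1 then v1 else if i = 2 then v2 else v3)"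
  define \<mu> where "\<mu> = (\<chi> i. V$i \<bullet> (S *v V$i))"
  have V: "V$1 = v1" "V$2 = v2" "V$3 = v3"
    by (simp_all add: V_def)
  have unit: "v1 \<bullet> v1 = 1" "v2 \<bullet> v2 = 1" "v3 \<bullet> v3 = 1"
    using nv1 nv2 nv3 by (simp_all add: dot_square_norm)
  show ?thesis
  proof
    show "orthogonal_matrix V"
      unfolding orthogonal_matrix_iff_rows
      using V unit v12 v123 by (auto simp: forall_3 inner_commute)
    show "S *v V$i = \<mu>$i *\<^sub>R V$i" for i
      using exhaust_3[of i] V ev1 ev2 ev3 by (auto simp: \<mu>_def)
    show "\<mu>$3 \<le> \<mu>$2" "\<mu>$2 \<le> \<mu>$1"
      using max2[OF _ nv3] v123(1) max1[OF nv2] by (simp_all add: \<mu>_def V L2_def)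
  qed
qed

lemma orthogonal_rows_decomposition:
  fixes B :: mat3
  assumes orth: "\<And>i j. i \<noteq> j \<Longrightarrow> B$i \<bullet> B$j = 0"
    and mono: "norm (B$3) \<le> norm (B$2)" "norm (B$2) \<le> norm (B$1)"
  obtains M l where "orthogonal_matrix M" "\<And>i. l$i \<ge> 0" "B = diag3 l ** M"
proof -
  have B12: "B$1 \<bullet> B$2 = 0" and B13: "B$3 \<bullet> B$1 = 0" and B23: "B$3 \<bullet> B$2 = 0"
    using orth by simp_all
  have norm_sgn_eq: "x = norm x *\<^sub>R sgn x" for x :: "real^3"
    by (cases "x = 0") (simp_all add: sgn_div_norm)
  (* zero rows come last, so the fallback choices below only occur for zero rows *)
  define u1 where "u1 = (if B$1 = 0 then axis 1 1 else sgn (B$1))"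
  have nu1: "norm u1 = 1"
    by (simp add: u1_def norm_sgn)
  obtain p where p: "norm p = 1" "p \<bullet> u1 = 0"
    using exists_unit_orthogonal by blast
  define u2 where "u2 = (if B$2 = 0 then p else sgn (B$2))"
  have nu2: "norm u2 = 1"
    using p by (simp add: u2_def norm_sgn)
  have u12: "u1 \<bullet> u2 = 0"
    using p B12 mono by (auto simp: u1_def u2_def sgn_div_norm inner_commute)
  have "B$3 \<bullet> u1 = 0 \<and> B$3 \<bullet> u2 = 0"
    using B13 B23 mono by (cases "B$3 = 0") (auto simp: u1_def u2_def sgn_div_norm)
  then obtain u3 where nu3: "norm u3 = 1" and u3: "u3 \<bullet> u1 = 0" "u3 \<bullet> u2 = 0"
    and B3: "B$3 \<bullet> u3 \<ge> 0" "B$3 = (B$3 \<bullet> u3) *\<^sub>R u3"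
    using orthonormal_pair_completion[OF nu1 nu2 u12] by blast
  define M where "M = (\<chi> i::3. if i = 1 then u1 else if i = 2 then u2 else u3)"
  define l where "l = (\<chi> i::3. if i = 3 then B$3 \<bullet> u3 else norm (B$i))"
  have "B$i = l$i *\<^sub>R M$i" for i
    using exhaust_3[of i] B3 norm_sgn_eq[of "B$1"] norm_sgn_eq[of "B$2"]
    by (auto simp: l_def M_def u1_def u2_def)
  then have "B = diag3 l ** M"
    by (simp add: vec_eq_iff diag3_mult)
  moreover have "orthogonal_matrix M"
    unfolding orthogonal_matrix_iff_rows using nu1 nu2 nu3 u12 u3
    by (auto simp: M_def forall_3 dot_square_norm inner_commute)
  moreover have "l$i \<ge> 0" for i
    using B3 by (simp add: l_def)
  ultimately show ?thesis
    using that by blast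
qed

lemma svd_exists:
  fixes A :: mat3
  shows "\<exists>l. (\<forall>i. l $ i \<ge> 0) \<and>
      (\<exists>U V. orthogonal_matrix U \<and> orthogonal_matrix V \<and> A = U ** diag3 l ** V)"
proof -
  define S where "S = transpose A ** A"
  have S: "(S *v x) \<bullet> y = (A *v x) \<bullet> (A *v y)" for x y
    by (simp add: S_def matrix_vector_mul_assoc[symmetric] dot_lmul_matrix)
  obtain V \<mu> where oV: "orthogonal_matrix V" and ev: "\<And>i. S *v V$i = \<mu>$i *\<^sub>R V$i"
    and \<mu>: "\<mu>$3 \<le> \<mu>$2" "\<mu>$2 \<le> \<mu>$1"
    using symmetric_matrix_eigenbasis[of S] S by (metis inner_commute)
  define B where "B = V ** transpose A"
  have B: "B$i = A *v V$i" for i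
    by (simp add: B_def vec_eq_iff matrix_matrix_mult_def matrix_vector_mult_def transpose_def
        mult.commute)
  have BB: "B$i \<bullet> B$j = \<mu>$i * (if i = j then 1 else 0)" for i j
    using oV ev[of i] S[of "V$i" "V$j"] by (simp add: B orthogonal_matrix_iff_rows)
  have "norm (B$3) \<le> norm (B$2)" "norm (B$2) \<le> norm (B$1)"
    using BB[of i i for i] \<mu> by (simp_all add: norm_eq_sqrt_inner)
  then obtain M l where oM: "orthogonal_matrix M" and l: "\<And>i. l$i \<ge> 0" and Bl: "B = diag3 l ** M"
    using orthogonal_rows_decomposition[of B] BB by auto
  have "A = transpose B ** V"
    using oV by (simp add: B_def matrix_transpose_mul orthogonal_matrix_mult_cancel)
  also have "\<dots> = transpose M ** diag3 l ** V"
    by (simp add: Bl matrix_transpose_mul transpose_diag3)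
  finally show ?thesis
    using oM oV l by (intro exI[of _ l] conjI allI exI[of _ "transpose M"] exI[of _ V]) auto
qed

lemma svals_nonneg: "svals A $ i \<ge> 0"
  using someI_ex[OF svd_exists[of A], folded svals_def] by blast

lemma svals_svd:
  obtains U V where "orthogonal_matrix U" "orthogonal_matrix V" "A = U ** diag3 (svals A) ** V"
  using someI_ex[OF svd_exists[of A], folded svals_def] by blast

lemma svd_invariants:
  assumes oU: "orthogonal_matrix U" and oV: "orthogonal_matrix V" and A: "A = U ** diag3 l ** V"
  defines "W \<equiv> V ** U"
  shows "trace A = l$1 * W$1$1 + l$2 * W$2$2 + l$3 * W$3$3"
    and "trace (cof A) = det W * (l$2 * l$3 * W$1$1 + l$1 * l$3 * W$2$2 + l$1 * l$2 * W$3$3)"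
    and "(norm A)\<^sup>2 = (l$1)\<^sup>2 + (l$2)\<^sup>2 + (l$3)\<^sup>2"
proof -
  define D where "D = diag3 l"
  have oW: "orthogonal_matrix W"
    using oU oV by (simp add: W_def orthogonal_matrix_mul)
  have tA: "trace A = trace (D ** W)"
    using trace_mul_sym[of U "D ** V"] by (simp add: A D_def W_def matrix_mul_assoc)
  then show "trace A = l$1 * W$1$1 + l$2 * W$2$2 + l$3 * W$3$3"
    by (simp add: D_def diag3_mult trace_def sum_3)
  have "trace (A ** A) = trace ((D ** W) ** (D ** W))"
    using trace_mul_sym[of U "D ** V ** U ** D ** V"] by (simp add: A D_def W_def matrix_mul_assoc)
  then have "trace (cof A) = trace (cof (D ** W))"
    by (simp add: trace_cof_eq_trace_square tA)
  also have "\<dots> = l$2 * l$3 * (W$2$2 * W$3$3 - W$2$3 * W$3$2)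
      + l$1 * l$3 * (W$1$1 * W$3$3 - W$1$3 * W$3$1) + l$1 * l$2 * (W$1$1 * W$2$2 - W$1$2 * W$2$1)"
    by (simp add: trace_cof D_def diag3_mult algebra_simps)
  finally show "trace (cof A) = det W * (l$2 * l$3 * W$1$1 + l$1 * l$3 * W$2$2 + l$1 * l$2 * W$3$3)"
    by (simp add: orthogonal_matrix_cof_diag[OF oW] algebra_simps)
  have "transpose A ** A = transpose V ** (D ** D) ** V"
    using oU by (simp add: A D_def matrix_transpose_mul transpose_diag3 matrix_mul_assoc
        orthogonal_matrix_mult_cancel)
  then have "trace (transpose A ** A) = trace (D ** D)"
    using trace_mul_sym[of "transpose V" "(D ** D) ** V"] oV
    by (simp add: matrix_mul_assoc orthogonal_matrix_mult_cancel)
  then show "(norm A)\<^sup>2 = (l$1)\<^sup>2 + (l$2)\<^sup>2 + (l$3)\<^sup>2"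
    unfolding norm_sq_eq_trace
    by (simp add: D_def diag3_mult trace_def sum_3) (simp add: diag3_def power2_eq_square)
qed

lemma diag3_singular_value_eq_abs_entry:
  assumes oU: "orthogonal_matrix U" and oV: "orthogonal_matrix V"
    and D: "diag3 d = U ** diag3 l ** V" and l: "\<And>i. l$i \<ge> 0"
  obtains i where "l$j = \<bar>d$i\<bar>"
proof -
  have "diag3 d ** (diag3 d ** U) = diag3 d ** transpose (diag3 d) ** U"
    by (simp add: transpose_diag3 matrix_mul_assoc)
  also have "\<dots> = U ** diag3 l ** V ** transpose V ** diag3 l ** transpose U ** U"
    unfolding D by (simp add: matrix_transpose_mul transpose_diag3 matrix_mul_assoc)
  also have "\<dots> = (U ** diag3 l) ** diag3 l"
    using oU oV by (simp add: orthogonal_matrix_mult_cancel)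
  finally have eig: "(d$i)\<^sup>2 * U$i$j = U$i$j * (l$j)\<^sup>2" for i
    by (simp add: vec_eq_iff diag3_mult mult_diag3 power2_eq_square algebra_simps)
  obtain i where "U$i$j \<noteq> 0"
  proof -
    have "norm (column j U) = 1"
      using oU by (simp add: orthogonal_matrix_orthonormal_columns)
    then have "column j U \<noteq> 0"
      by auto
    then show ?thesis
      using that by (auto simp: column_def vec_eq_iff)
  qed
  then have "(l$j)\<^sup>2 = (d$i)\<^sup>2"
    using eig[of i] by simp
  then have "l$j = \<bar>d$i\<bar>"
    using l[of j] by (metis abs_of_nonneg power2_eq_iff_nonneg abs_ge_zero power2_abs)
  then show ?thesis
    by (rule that)
qed

section \<open>The upper bound\<close>

lemma sum3_le_sqrt3_mult:
  fixes a b c :: real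
  shows "a + b + c \<le> sqrt 3 * sqrt (a\<^sup>2 + b\<^sup>2 + c\<^sup>2)"
proof -
  have "(a + b + c)\<^sup>2 \<le> 3 * (a\<^sup>2 + b\<^sup>2 + c\<^sup>2)"
    using zero_le_power2[of "a - b"] zero_le_power2[of "a - c"] zero_le_power2[of "b - c"]
    by (simp add: power2_eq_square algebra_simps)
  then have "a + b + c \<le> sqrt (3 * (a\<^sup>2 + b\<^sup>2 + c\<^sup>2))"
    by (rule real_le_rsqrt)
  then show ?thesis
    by (simp only: real_sqrt_mult)
qed

lemma orthogonal_matrix_linear_part_bounds:
  fixes W :: mat3 and l :: "real^3"
  assumes "orthogonal_matrix W" "\<And>i. l$i \<ge> 0"
  shows "0 \<le> l$1 * (1 - W$1$1) + l$2 * (1 - W$2$2) + l$3 * (1 - W$3$3)"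
    and "l$1 * (1 - W$1$1) + l$2 * (1 - W$2$2) + l$3 * (1 - W$3$3) \<le> 2 * (l$1 + l$2 + l$3)"
proof -
  have a: "0 \<le> l$i * (1 - W$i$i)" and b: "0 \<le> l$i * (1 + W$i$i)" for i
    using orthogonal_matrix_entry_abs_le[OF assms(1), of i i] assms(2)[of i]
    by (simp_all add: abs_le_iff)
  show "0 \<le> l$1 * (1 - W$1$1) + l$2 * (1 - W$2$2) + l$3 * (1 - W$3$3)"
    using a[of 1] a[of 2] a[of 3] by linarith
  show "l$1 * (1 - W$1$1) + l$2 * (1 - W$2$2) + l$3 * (1 - W$3$3) \<le> 2 * (l$1 + l$2 + l$3)"
    using b[of 1] b[of 2] b[of 3] by (simp add: algebra_simps)
qed

lemma Gfun_svd:
  assumes "orthogonal_matrix U" "orthogonal_matrix V" "A = U ** diag3 (svals A) ** V"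
  defines "l \<equiv> svals A" and "W \<equiv> V ** U"
  shows "Gfun lam A = (l$2 * l$3 * (1 - det W * W$1$1) + l$1 * l$3 * (1 - det W * W$2$2)
      + l$1 * l$2 * (1 - det W * W$3$3))
    - lam * (l$1 * (1 - W$1$1) + l$2 * (1 - W$2$2) + l$3 * (1 - W$3$3))"
  unfolding Gfun_def Pfun_eq Nfun_def svd_invariants(1,2)[OF assms(1-3)] l_def W_def
  by (simp add: algebra_simps)

lemma Gfun_abs_le:
  assumes lam: "lam \<ge> 0"
  shows "\<bar>Gfun lam A\<bar> \<le> sqrt 2 * (norm A)\<^sup>2 + 2 * sqrt 3 * lam * norm A"
proof -
  define l where "l = svals A"
  obtain U V where oU: "orthogonal_matrix U" and oV: "orthogonal_matrix V"
    and A: "A = U ** diag3 (svals A) ** V"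
    using svals_svd by blast
  have l0: "l$i \<ge> 0" for i
    by (simp add: l_def svals_nonneg)
  define W where "W = V ** U"
  have oW: "orthogonal_matrix W"
    using oU oV by (simp add: W_def orthogonal_matrix_mul)
  have norm_A: "norm A = sqrt ((l$1)\<^sup>2 + (l$2)\<^sup>2 + (l$3)\<^sup>2)"
    using svd_invariants(3)[OF oU oV A] by (simp add: l_def real_sqrt_unique)
  define Q where "Q = l$2 * l$3 * (1 - det W * W$1$1) + l$1 * l$3 * (1 - det W * W$2$2)
    + l$1 * l$2 * (1 - det W * W$3$3)"
  define Lin where "Lin = l$1 * (1 - W$1$1) + l$2 * (1 - W$2$2) + l$3 * (1 - W$3$3)"
  have "0 \<le> Q" "Q \<le> sqrt 2 * (norm A)\<^sup>2"
    unfolding Q_def norm_A using orthogonal_matrix_quadratic_bounds[OF oW l0] by simp_all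
  moreover have Lin: "0 \<le> Lin" "Lin \<le> 2 * (l$1 + l$2 + l$3)"
    unfolding Lin_def by (rule orthogonal_matrix_linear_part_bounds[OF oW l0])+
  moreover have "l$1 + l$2 + l$3 \<le> sqrt 3 * norm A"
    unfolding norm_A by (rule sum3_le_sqrt3_mult)
  then have "lam * Lin \<le> lam * (2 * (sqrt 3 * norm A))"
    using Lin(2) lam by (intro mult_left_mono) auto
  moreover have "0 \<le> lam * Lin"
    using Lin(1) lam by simp
  moreover have "Gfun lam A = Q - lam * Lin"
    unfolding Q_def Lin_def l_def W_def by (rule Gfun_svd[OF oU oV A])
  ultimately show ?thesis
    by (simp add: abs_le_iff algebra_simps)
qed

definition M2_majorant :: "real \<Rightarrow> real \<Rightarrow> real" where
  "M2_majorant lam c =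
     sqrt 2 * (1 + lam * sqrt 3 / c)\<^sup>2 + 2 * sqrt 3 * lam * (1 / c + lam * sqrt 3 / c\<^sup>2)"

lemma Gfun_ratio_le:
  assumes lam: "lam \<ge> 0" and c: "c > 0" and r: "norm (A - lam *\<^sub>R mat 1) \<ge> c"
  shows "\<bar>Gfun lam A\<bar> / (norm (A - lam *\<^sub>R mat 1))\<^sup>2 \<le> M2_majorant lam c"
proof -
  define r where "r = norm (A - lam *\<^sub>R mat 1)"
  define k where "k = lam * sqrt 3"
  have r0: "r > 0" "r \<ge> c"
    using c r unfolding r_def by auto
  have k0: "k \<ge> 0"
    using lam by (simp add: k_def)
  have N: "norm A \<le> r + k"
    using norm_triangle_ineq[of "A - lam *\<^sub>R mat 1" "lam *\<^sub>R mat 1"] lam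
    by (simp add: r_def k_def norm_mat1)
  have "\<bar>Gfun lam A\<bar> \<le> sqrt 2 * (norm A)\<^sup>2 + 2 * sqrt 3 * lam * norm A"
    by (rule Gfun_abs_le[OF lam])
  also have "\<dots> \<le> sqrt 2 * (r + k)\<^sup>2 + 2 * sqrt 3 * lam * (r + k)"
    using N lam by (intro add_mono mult_left_mono power_mono) auto
  finally have "\<bar>Gfun lam A\<bar> / r\<^sup>2
      \<le> (sqrt 2 * (r + k)\<^sup>2 + 2 * sqrt 3 * lam * (r + k)) / r\<^sup>2"
    using r0 by (intro divide_right_mono) auto
  also have "\<dots> = sqrt 2 * (1 + k / r)\<^sup>2 + 2 * sqrt 3 * lam * (1 / r + k / r\<^sup>2)"
    using r0 by (simp add: field_simps power2_eq_square)
  also have "\<dots> \<le> sqrt 2 * (1 + k / c)\<^sup>2 + 2 * sqrt 3 * lam * (1 / c + k / c\<^sup>2)"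
  proof -
    have "k / r \<le> k / c" "1 / r \<le> 1 / c" "k / r\<^sup>2 \<le> k / c\<^sup>2"
      using k0 r0 c by (auto intro!: divide_left_mono power_mono mult_pos_pos)
    then show ?thesis
      using k0 r0 c lam
      by (intro add_mono mult_left_mono power_mono) (auto intro: add_nonneg_nonneg)
  qed
  finally show ?thesis
    unfolding r_def M2_majorant_def k_def .
qed

lemma M2_le_majorant:
  assumes lam: "lam \<ge> 0" and c: "c > 0"
  shows "M2 lam c \<le> M2_majorant lam c"
  unfolding M2_def
proof (rule cSUP_least)
  have "(c + lam) *\<^sub>R mat 1 \<in> {A :: mat3. norm (A - lam *\<^sub>R mat 1) \<ge> c}"
    using c by (simp flip: scaleR_diff_left add: norm_mat1)
  then show "{A :: mat3. norm (A - lam *\<^sub>R mat 1) \<ge> c} \<noteq> {}"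
    by blast
qed (use Gfun_ratio_le[OF lam c] in auto)

section \<open>The lower bound\<close>

(* With singular values (t, t, \<surd>2 t) and W = diag(1, 1, -1) this matrix is the equality
   case of tetrahedron_weighted_sum_le at the vertex (-1, -1, 1). *)
definition extremal_matrix :: "real \<Rightarrow> mat3" where
  "extremal_matrix t = diag3 (\<chi> i. if i = 3 then - (sqrt 2 * t) else t)"

lemma extremal_matrix_svals:
  assumes t: "t > 0"
  shows "svals (extremal_matrix t) $ 1 + svals (extremal_matrix t) $ 2
           + svals (extremal_matrix t) $ 3 = (2 + sqrt 2) * t"
    and "svals (extremal_matrix t) $ 1 * svals (extremal_matrix t) $ 2
           + svals (extremal_matrix t) $ 1 * svals (extremal_matrix t) $ 3
           + svals (extremal_matrix t) $ 2 * svals (extremal_matrix t) $ 3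
         = (1 + 2 * sqrt 2) * t\<^sup>2"
proof -
  define l where "l = svals (extremal_matrix t)"
  obtain U V where oU: "orthogonal_matrix U" and oV: "orthogonal_matrix V"
    and A: "extremal_matrix t = U ** diag3 l ** V"
    using svals_svd unfolding l_def by blast
  have l: "l$j = t \<or> l$j = sqrt 2 * t" for j
  proof -
    obtain i where "l$j = \<bar>(\<chi> i::3. if i = 3 then - (sqrt 2 * t) else t) $ i\<bar>"
      using diag3_singular_value_eq_abs_entry[OF oU oV A[unfolded extremal_matrix_def]]
        svals_nonneg l_def by blast
    then show ?thesis
      using t by (auto split: if_splits)
  qed
  have sq: "(l$1)\<^sup>2 + (l$2)\<^sup>2 + (l$3)\<^sup>2 = 4 * t\<^sup>2"
    using svd_invariants(3)[OF oU oV A]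
    by (simp add: norm_sq_eq_entries extremal_matrix_def diag3_def sum_3 power_mult_distrib)
  have s2: "(sqrt 2 * t)\<^sup>2 = 2 * t\<^sup>2" "sqrt 2 * t * (sqrt 2 * t) = 2 * t\<^sup>2"
    by (simp_all add: power_mult_distrib power2_eq_square)
  have "t\<^sup>2 > 0"
    using t by simp
  with l[of 1] l[of 2] l[of 3] sq
  have "l$1 + l$2 + l$3 = (2 + sqrt 2) * t
      \<and> l$1 * l$2 + l$1 * l$3 + l$2 * l$3 = (1 + 2 * sqrt 2) * t\<^sup>2"
    by (elim disjE) (simp_all add: s2 algebra_simps power2_eq_square)
  then show "l$1 + l$2 + l$3 = (2 + sqrt 2) * t"
    and "l$1 * l$2 + l$1 * l$3 + l$2 * l$3 = (1 + 2 * sqrt 2) * t\<^sup>2"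
    by auto
qed

lemma Gfun_extremal_matrix:
  assumes "t > 0"
  shows "Gfun lam (extremal_matrix t) = 4 * sqrt 2 * t\<^sup>2 - 2 * sqrt 2 * lam * t"
proof -
  have tr: "trace (extremal_matrix t) = 2 * t - sqrt 2 * t"
    by (simp add: extremal_matrix_def diag3_def trace_def sum_3)
  have tr_cof: "trace (cof (extremal_matrix t)) = t\<^sup>2 - 2 * sqrt 2 * t\<^sup>2"
    unfolding trace_cof by (simp add: extremal_matrix_def diag3_def power2_eq_square algebra_simps)
  show ?thesis
    unfolding Gfun_def Pfun_eq extremal_matrix_svals[OF assms] Nfun_def tr tr_cof
    by (simp add: algebra_simps)
qed

lemma norm_extremal_matrix_sq:
  "(norm (extremal_matrix t - lam *\<^sub>R mat 1))\<^sup>2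
     = 4 * t\<^sup>2 + (2 * sqrt 2 - 4) * lam * t + 3 * lam\<^sup>2"
  unfolding norm_sq_eq_entries
  by (simp add: extremal_matrix_def diag3_def mat_def sum_3 power2_eq_square algebra_simps)

lemma norm_extremal_matrix_ge:
  assumes "t > 0" "lam \<ge> 0"
  shows "norm (extremal_matrix t - lam *\<^sub>R mat 1) \<ge> t"
proof -
  have "(extremal_matrix t - lam *\<^sub>R mat 1)$3$3 = - (sqrt 2 * t + lam)"
    by (simp add: extremal_matrix_def diag3_def mat_def)
  moreover have "t \<le> sqrt 2 * t"
    using assms by simp
  ultimately show ?thesis
    using entry_abs_le_norm[of "extremal_matrix t - lam *\<^sub>R mat 1" 3 3] assms by linarith
qed

lemma sqrt2_le_M2:
  assumes lam: "lam \<ge> 0" and c: "c > 0"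
  shows "sqrt 2 \<le> M2 lam c"
proof (rule tendsto_le[OF trivial_limit_at_top_linorder tendsto_const])
  let ?ratio = "\<lambda>t. \<bar>4 * sqrt 2 * t\<^sup>2 - 2 * sqrt 2 * lam * t\<bar>
    / (4 * t\<^sup>2 + (2 * sqrt 2 - 4) * lam * t + 3 * lam\<^sup>2)"
  show "(?ratio \<longlongrightarrow> sqrt 2) at_top"
    by (real_asymp simp add: sqrt_def)
  have "?ratio t \<le> M2 lam c" if "t \<ge> c" for t
  proof -
    let ?f = "\<lambda>A. \<bar>Gfun lam A\<bar> / (norm (A - lam *\<^sub>R mat 1))\<^sup>2"
    let ?S = "{A. c \<le> norm (A - lam *\<^sub>R mat 1)}"
    have t: "t > 0"
      using c that by simp
    have "extremal_matrix t \<in> ?S"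
      using norm_extremal_matrix_ge[OF t lam] that by simp
    moreover have "bdd_above (?f ` ?S)"
      using Gfun_ratio_le[OF lam c] by (auto intro!: bdd_aboveI2)
    ultimately have "?f (extremal_matrix t) \<le> M2 lam c"
      unfolding M2_def by (rule cSUP_upper)
    then show ?thesis
      by (simp add: Gfun_extremal_matrix[OF t] norm_extremal_matrix_sq)
  qed
  then show "\<forall>\<^sub>F t in at_top. ?ratio t \<le> M2 lam c"
    unfolding eventually_at_top_linorder by blast
qed

theorem proposition3p6:
  fixes lam :: real
  assumes "lam > 0"
  shows "((\<lambda>c0. M2 lam c0) \<longlongrightarrow> sqrt 2) at_top"
proof (rule tendsto_sandwich[of "\<lambda>_. sqrt 2" _ _ "M2_majorant lam"])
  have lam: "lam \<ge> 0"
    using assms by simp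
  show "\<forall>\<^sub>F c in at_top. sqrt 2 \<le> M2 lam c"
    using eventually_gt_at_top[of 0] by eventually_elim (rule sqrt2_le_M2[OF lam])
  show "\<forall>\<^sub>F c in at_top. M2 lam c \<le> M2_majorant lam c"
    using eventually_gt_at_top[of 0] by eventually_elim (rule M2_le_majorant[OF lam])
  show "((\<lambda>_. sqrt 2) \<longlongrightarrow> sqrt 2) at_top"
    by simp
  show "(M2_majorant lam \<longlongrightarrow> sqrt 2) at_top"
    unfolding M2_majorant_def by (real_asymp simp add: sqrt_def)
qed

end
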